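(* Let $\mathcal G=(\mathcal N,E)$ be an undirected graph on $N$ nodes with adjacency-type matrix $A$ and maximal degree $d_{\max}$ (defined in the context), and let $x^\star$ be any solution of $$\min_{x\in\mathbb R^N}\mathbf 1^\top x\quad\text{s.t.}\quad Ax\ge\mathbf 1,\ x\ge 0.$$ Run Algorithm 1 (described in the context) with $\delta=\epsilon$ and $\alpha=\frac{\delta}{2(d_{\max}+1)^2}$, where $\epsilon>0$. Then the $(1+\epsilon)$-approximation ratio $\frac{\mathbf 1^\top x^{(K_\epsilon)}-\mathbf 1^\top x^\star}{\mathbf 1^\top x^\star}\le\epsilon$ is achieved after $K_\epsilon=O\big(d_{\max}^{3/2}/\epsilon\big)$ iterations; precisely, there is an absolute constant $C>0$ such that for all $\epsilon\in(0,1]$ and all such graphs the ratio holds for every $k\ge C\,(d_{\max}+1)^{3/2}/\epsilon$.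
   Context: $A$ is the $N\times N$ symmetric matrix with $A_{ii}=1$ for all $i$ and, for $i\ne j$, $A_{ij}=1$ if $\{i,j\}\in E$, $A_{ij}=0$ otherwise. $\Omega_i$ is the closed one-hop neighborhood of node $i$ (its neighbors together with $i$). $d_{\max}$ is the maximal degree of $\mathcal G$, where the degree of $i$ is its number of neighbors excluding $i$, i.e. $|\Omega_i|-1$. $\mathbf 1$ is the all-ones vector, $[c]_+=\max\{0,c\}$, and $\mathcal P_{[0,1]}(c)=\min\{1,\max\{0,c\}\}$. Algorithm 1: initialize $\lambda_i^{(0)}=0$ and $z_i^{(-1)}=0$ for all $i$ (the value of $\overline x_j^{(-1)}$ is irrelevant since it is multiplied by $0$). For $k=0,1,2,\dots$, each node $i$ computes $$\widehat x_i^{(k)}=\mathcal P_{[0,1]}\Big(\tfrac1\delta\big(\textstyle\sum_{j\in\Omega_i}\lambda_j^{(k)}-1\big)\Big),$$ and then $$z_i^{(k)}=z_i^{(k-1)}+\tfrac{k+1}{2}\Big(1-\textstyle\sum_{j\in\Omega_i}\widehat x_j^{(k)}\Big),\qquad \mu_i^{(k)}=\Big[\lambda_i^{(k)}+\alpha\big(1-\textstyle\sum_{j\in\Omega_i}\widehat x_j^{(k)}\big)\Big]_+,$$ $$\lambda_i^{(k+1)}=\tfrac{k+1}{k+3}\mu_i^{(k)}+\tfrac{2}{k+3}\,\alpha\,[z_i^{(k)}]_+,\qquad \overline x_j^{(k)}=\tfrac{k}{k+2}\overline x_j^{(k-1)}+\tfrac{2}{k+2}\widehat x_j^{(k)},$$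 $$x_i^{(k)}=\overline x_i^{(k)}+\Big[1-\textstyle\sum_{j\in\Omega_i}\overline x_j^{(k)}\Big]_+ .$$ *)

theory Defs
  imports Complex_Main
begin

definition simple_graph :: "nat \<Rightarrow> nat set set \<Rightarrow> bool" where
  "simple_graph N E \<longleftrightarrow> (\<forall>e\<in>E. \<exists>i j. i < N \<and> j < N \<and> i \<noteq> j \<and> e = {i, j})"

definition adjA :: "nat set set \<Rightarrow> nat \<Rightarrow> nat \<Rightarrow> real" where
  "adjA E i j = (if i = j \<or> {i, j} \<in> E then 1 else 0)"

definition nbhd :: "nat \<Rightarrow> nat set set \<Rightarrow> nat \<Rightarrow> nat set" where
  "nbhd N E i = {j. j < N \<and> (j = i \<or> {i, j} \<in> E)}"

definition dmax :: "nat \<Rightarrow> nat set set \<Rightarrow> nat" where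
  "dmax N E = Max ((\<lambda>i. card (nbhd N E i) - 1) ` {..<N})"

definition lp_feasible :: "nat \<Rightarrow> nat set set \<Rightarrow> (nat \<Rightarrow> real) \<Rightarrow> bool" where
  "lp_feasible N E x \<longleftrightarrow>
     (\<forall>i<N. (\<Sum>j<N. adjA E i j * x j) \<ge> 1) \<and> (\<forall>i<N. x i \<ge> 0)"

definition lp_optimal :: "nat \<Rightarrow> nat set set \<Rightarrow> (nat \<Rightarrow> real) \<Rightarrow> bool" where
  "lp_optimal N E x \<longleftrightarrow> lp_feasible N E x \<and>
     (\<forall>y. lp_feasible N E y \<longrightarrow> (\<Sum>i<N. x i) \<le> (\<Sum>i<N. y i))"

definition proj01 :: "real \<Rightarrow> real" where
  "proj01 c = min 1 (max 0 c)"

definition pospart :: "real \<Rightarrow> real" where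
  "pospart c = max 0 c"

text \<open>alg_state N E delta alpha k = (lambda^(k), z^(k-1), xbar^(k-1)).\<close>
fun alg_state :: "nat \<Rightarrow> nat set set \<Rightarrow> real \<Rightarrow> real \<Rightarrow> nat \<Rightarrow>
    (nat \<Rightarrow> real) \<times> (nat \<Rightarrow> real) \<times> (nat \<Rightarrow> real)" where
  "alg_state N E \<delta> \<alpha> 0 = ((\<lambda>_. 0), (\<lambda>_. 0), (\<lambda>_. 0))"
| "alg_state N E \<delta> \<alpha> (Suc k) =
     (let (lam, z, xb) = alg_state N E \<delta> \<alpha> k;
          xh = (\<lambda>i. proj01 ((1 / \<delta>) * ((\<Sum>j\<in>nbhd N E i. lam j) - 1)));
          r = (\<lambda>i. 1 - (\<Sum>j\<in>nbhd N E i. xh j));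
          z' = (\<lambda>i. z i + (real k + 1) / 2 * r i);
          \<mu> = (\<lambda>i. pospart (lam i + \<alpha> * r i));
          lam' = (\<lambda>i. (real k + 1) / (real k + 3) * \<mu> i
                      + 2 / (real k + 3) * \<alpha> * pospart (z' i));
          xb' = (\<lambda>j. real k / (real k + 2) * xb j + 2 / (real k + 2) * xh j)
      in (lam', z', xb'))"

definition alg_x :: "nat \<Rightarrow> nat set set \<Rightarrow> real \<Rightarrow> real \<Rightarrow> nat \<Rightarrow> nat \<Rightarrow> real" where
  "alg_x N E \<delta> \<alpha> k i =
     (let xb = snd (snd (alg_state N E \<delta> \<alpha> (Suc k)))
      in xb i + pospart (1 - (\<Sum>j\<in>nbhd N E i. xb j)))"

end

theory Submission
  imports Defs "HOL-Analysis.Convex"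
begin

text \<open>
  Algorithm 1 is Nesterov's accelerated projected gradient ascent on the dual of the regularised
  problem: minimise 1^T x + \<delta>/2 |x|^2 over x \<in> [0,1]^N subject to Ax \<ge> 1.  Its dual function \<phi>
  is concave with a (d_max+1)^2/\<delta>-Lipschitz gradient, because every row of A has at most d_max+1
  ones.  With weights a_t = (t+1)/2 and A_k = a_0 + ... + a_k, an estimate-sequence argument shows
  that for every l \<ge> 0 the weighted linear model
  \<Sum>_{t\<le>k} a_t (\<phi>(\<lambda>_t) + \<langle>\<nabla>\<phi>(\<lambda>_t), l - \<lambda>_t\<rangle>) - |l|^2/(2\<alpha>) is at most A_k \<phi>(\<mu>_k),
  and \<phi> \<le> (1+\<delta>/2) OPT by weak duality.  Taking for l the indicator of the constraints violated by
  the averaged primal point xbar bounds the cost of xbar together with its repair [1 - A xbar]_+ by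
  (1+\<delta>/2) OPT + N/(2\<alpha> A_k).  Since OPT \<ge> N/(d_max+1) and A_k \<ge> k^2/4, the additive error is at
  most \<epsilon> OPT once k \<ge> 3 (d_max+1)^(3/2)/\<epsilon>.
\<close>

lemma nbhd_subset_lessThan: "nbhd N E i \<subseteq> {..<N}"
  by (auto simp: nbhd_def)

lemma finite_nbhd [simp]: "finite (nbhd N E i)"
  by (rule finite_subset[OF nbhd_subset_lessThan]) simp

lemma mem_nbhd_commute: "i < N \<Longrightarrow> j < N \<Longrightarrow> j \<in> nbhd N E i \<longleftrightarrow> i \<in> nbhd N E j"
  unfolding nbhd_def by (simp add: insert_commute eq_commute)

lemma sum_nbhd_eq_sum_if: "(\<Sum>j\<in>nbhd N E i. f j) = (\<Sum>j<N. if j \<in> nbhd N E i then f j else 0)"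
proof -
  have "nbhd N E i = {..<N} \<inter> nbhd N E i"
    using nbhd_subset_lessThan by blast
  then show ?thesis by (metis (no_types) finite_lessThan sum.inter_restrict)
qed

lemma sum_nbhd_swap: "(\<Sum>i<N. \<Sum>j\<in>nbhd N E i. F i j) = (\<Sum>j<N. \<Sum>i\<in>nbhd N E j. F i j)"
proof -
  have "(\<Sum>i<N. \<Sum>j\<in>nbhd N E i. F i j) = (\<Sum>j<N. \<Sum>i<N. if j \<in> nbhd N E i then F i j else 0)"
    unfolding sum_nbhd_eq_sum_if by (rule sum.swap)
  also have "\<dots> = (\<Sum>j<N. \<Sum>i<N. if i \<in> nbhd N E j then F i j else 0)"
    by (intro sum.cong refl) (simp add: mem_nbhd_commute)
  finally show ?thesis by (simp add: sum_nbhd_eq_sum_if)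
qed

lemma card_nbhd_le: "i < N \<Longrightarrow> real (card (nbhd N E i)) \<le> real (dmax N E) + 1"
proof -
  assume "i < N"
  then have "card (nbhd N E i) - 1 \<le> dmax N E"
    unfolding dmax_def by (intro Max_ge) auto
  then show ?thesis by linarith
qed

lemma sum_adjA_eq_sum_nbhd: "i < N \<Longrightarrow> (\<Sum>j<N. adjA E i j * x j) = (\<Sum>j\<in>nbhd N E i. x j)"
  unfolding sum_nbhd_eq_sum_if by (intro sum.cong refl) (auto simp: adjA_def nbhd_def)

lemma lp_feasible_nbhd_ge:
  "lp_feasible N E x \<Longrightarrow> i < N \<Longrightarrow> 1 \<le> (\<Sum>j\<in>nbhd N E i. x j)"
  unfolding lp_feasible_def by (metis sum_adjA_eq_sum_nbhd)

lemma lp_feasible_nonneg: "lp_feasible N E x \<Longrightarrow> i < N \<Longrightarrow> 0 \<le> x i"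
  unfolding lp_feasible_def by blast

lemma lp_feasible_sum_ge:
  assumes "lp_feasible N E x"
  shows "real N \<le> (real (dmax N E) + 1) * (\<Sum>i<N. x i)"
proof -
  have "real N \<le> (\<Sum>i<N. \<Sum>j\<in>nbhd N E i. x j)"
    using sum_mono[of "{..<N}" "\<lambda>_. 1::real"] lp_feasible_nbhd_ge[OF assms] by simp
  also have "\<dots> = (\<Sum>j<N. real (card (nbhd N E j)) * x j)"
    by (simp add: sum_nbhd_swap[where F="\<lambda>i j. x j"])
  also have "\<dots> \<le> (\<Sum>j<N. (real (dmax N E) + 1) * x j)"
    by (intro sum_mono mult_right_mono card_nbhd_le) (auto intro: lp_feasible_nonneg[OF assms])
  finally show ?thesis by (simp add: sum_distrib_left)
qed

lemma proj01_minimizes: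
  fixes x c d :: real
  assumes "0 < d" "0 \<le> x" "x \<le> 1" and p: "p = proj01 ((1 / d) * (c - 1))"
  shows "p + d/2 * p\<^sup>2 - p * c + d/2 * (x - p)\<^sup>2 \<le> x + d/2 * x\<^sup>2 - x * c"
proof -
  have "(x - p) * (1 - c + d * p) \<ge> 0"
  proof (cases "c - 1 \<le> 0")
    case True
    with assms show ?thesis
      by (simp add: proj01_def mult_nonneg_nonpos2 divide_nonpos_pos)
  next
    case False
    show ?thesis
    proof (cases "d \<le> c - 1")
      case True
      with assms show ?thesis
        by (simp add: proj01_def mult_nonpos_nonpos le_divide_eq)
    next
      case False
      with \<open>\<not> c - 1 \<le> 0\<close> assms show ?thesis
        by (simp add: proj01_def divide_le_eq)
    qed
  qed
  moreover have "x + d/2 * x\<^sup>2 - x * c - (p + d/2 * p\<^sup>2 - p * c + d/2 * (x - p)\<^sup>2)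
      = (x - p) * (1 - c + d * p)"
    by (simp add: algebra_simps power2_eq_square)
  ultimately show ?thesis by linarith
qed

lemma pospart_maximizes:
  fixes y l g \<alpha> :: real
  assumes "0 < \<alpha>" "0 \<le> y"
  shows "g * (y - l) - (y - l)\<^sup>2 / (2*\<alpha>)
    \<le> g * (pospart (l + \<alpha> * g) - l) - (pospart (l + \<alpha> * g) - l)\<^sup>2 / (2*\<alpha>)"
proof -
  let ?p = "l + \<alpha> * g"
  have completed_square: "g * (t - l) - (t - l)\<^sup>2 / (2*\<alpha>) = \<alpha> * g\<^sup>2 / 2 - (t - ?p)\<^sup>2 / (2*\<alpha>)" for t
    using assms(1) by (simp add: field_simps power2_eq_square)
  have "(pospart ?p - ?p)\<^sup>2 \<le> (y - ?p)\<^sup>2"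
    using assms(2) by (cases "?p \<ge> 0") (auto simp: pospart_def intro!: power_mono)
  then show ?thesis
    using assms(1) by (simp add: completed_square divide_right_mono)
qed

lemma pospart_maximizes_quadratic:
  fixes z l \<alpha> :: real
  assumes "0 < \<alpha>" "0 \<le> l"
  shows "z * l - l\<^sup>2 / (2*\<alpha>) + (l - \<alpha> * pospart z)\<^sup>2 / (2*\<alpha>)
    \<le> z * (\<alpha> * pospart z) - (\<alpha> * pospart z)\<^sup>2 / (2*\<alpha>)"
  using assms
  by (cases "z \<ge> 0") (simp_all add: pospart_def field_simps power2_eq_square mult_nonneg_nonpos)

lemma pospart_nonneg [simp]: "0 \<le> pospart c"
  by (simp add: pospart_def)

text \<open>\<open>primal_resp l\<close> is Algorithm 1's x-hat, the minimiser of the Lagrangian over the box \<open>[0,1]^N\<close>;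
  hence \<open>dual\<close> is the dual function and \<open>dual_grad l = 1 - A (primal_resp l)\<close> is its gradient.\<close>

locale regularized_cover =
  fixes N :: nat and E :: "nat set set" and \<delta> :: real
  assumes delta_pos: "0 < \<delta>"
begin

abbreviation D :: real where "D \<equiv> real (dmax N E) + 1"

definition dot :: "(nat \<Rightarrow> real) \<Rightarrow> (nat \<Rightarrow> real) \<Rightarrow> real" where
  "dot u w = (\<Sum>i<N. u i * w i)"

definition sqnorm :: "(nat \<Rightarrow> real) \<Rightarrow> real" where
  "sqnorm u = (\<Sum>i<N. (u i)\<^sup>2)"

definition lagrangian :: "(nat \<Rightarrow> real) \<Rightarrow> (nat \<Rightarrow> real) \<Rightarrow> real" where
  "lagrangian x l =
     (\<Sum>i<N. x i + \<delta>/2 * (x i)\<^sup>2) + (\<Sum>i<N. l i * (1 - (\<Sum>j\<in>nbhd N E i. x j)))"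

definition primal_resp :: "(nat \<Rightarrow> real) \<Rightarrow> nat \<Rightarrow> real" where
  "primal_resp l i = proj01 ((1 / \<delta>) * ((\<Sum>j\<in>nbhd N E i. l j) - 1))"

definition dual_grad :: "(nat \<Rightarrow> real) \<Rightarrow> nat \<Rightarrow> real" where
  "dual_grad l i = 1 - (\<Sum>j\<in>nbhd N E i. primal_resp l j)"

definition dual :: "(nat \<Rightarrow> real) \<Rightarrow> real" where
  "dual l = lagrangian (primal_resp l) l"

lemma sqnorm_nonneg: "0 \<le> sqnorm u"
  unfolding sqnorm_def by (simp add: sum_nonneg)

lemma dot_diff_right: "dot g (\<lambda>i. u i - w i) = dot g u - dot g w"
  unfolding dot_def by (simp add: right_diff_distrib sum_subtractf)

lemma primal_resp_bounds: "0 \<le> primal_resp l i" "primal_resp l i \<le> 1"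
  unfolding primal_resp_def proj01_def by simp_all

lemma sum_nbhd_transpose:
  fixes x y :: "nat \<Rightarrow> real"
  shows "(\<Sum>i<N. (\<Sum>j\<in>nbhd N E i. x j) * y i) = (\<Sum>j<N. x j * (\<Sum>i\<in>nbhd N E j. y i))"
proof -
  have "(\<Sum>i<N. (\<Sum>j\<in>nbhd N E i. x j) * y i) = (\<Sum>i<N. \<Sum>j\<in>nbhd N E i. x j * y i)"
    by (simp add: sum_distrib_right)
  also have "\<dots> = (\<Sum>j<N. \<Sum>i\<in>nbhd N E j. x j * y i)"
    by (rule sum_nbhd_swap)
  finally show ?thesis by (simp add: sum_distrib_left)
qed

lemma lagrangian_by_primal:
  "lagrangian x l = (\<Sum>i<N. l i) + (\<Sum>j<N. x j + \<delta>/2 * (x j)\<^sup>2 - x j * (\<Sum>i\<in>nbhd N E j. l i))"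
proof -
  have "(\<Sum>i<N. l i * (1 - (\<Sum>j\<in>nbhd N E i. x j)))
      = (\<Sum>i<N. l i) - (\<Sum>j<N. x j * (\<Sum>i\<in>nbhd N E j. l i))"
    using sum_nbhd_transpose[of x l]
    by (simp add: right_diff_distrib sum_subtractf mult.commute)
  then show ?thesis
    unfolding lagrangian_def by (simp add: sum_subtractf)
qed

lemma lagrangian_primal_resp_le:
  assumes "\<And>i. i < N \<Longrightarrow> 0 \<le> x i \<and> x i \<le> 1"
  shows "lagrangian (primal_resp l) l + \<delta>/2 * sqnorm (\<lambda>i. x i - primal_resp l i) \<le> lagrangian x l"
proof -
  have "(\<Sum>j<N. primal_resp l j + \<delta>/2 * (primal_resp l j)\<^sup>2
          - primal_resp l j * (\<Sum>i\<in>nbhd N E j. l i) + \<delta>/2 * (x j - primal_resp l j)\<^sup>2)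
      \<le> (\<Sum>j<N. x j + \<delta>/2 * (x j)\<^sup>2 - x j * (\<Sum>i\<in>nbhd N E j. l i))"
    using proj01_minimizes[OF delta_pos] assms by (intro sum_mono) (simp add: primal_resp_def)
  then show ?thesis
    unfolding lagrangian_by_primal sqnorm_def by (simp add: sum.distrib sum_distrib_left)
qed

lemma lagrangian_dual_affine:
  "lagrangian x m = lagrangian x l + dot (\<lambda>i. 1 - (\<Sum>j\<in>nbhd N E i. x j)) (\<lambda>i. m i - l i)"
proof -
  have "(\<Sum>i<N. m i * (1 - (\<Sum>j\<in>nbhd N E i. x j)))
      = (\<Sum>i<N. l i * (1 - (\<Sum>j\<in>nbhd N E i. x j)) + (1 - (\<Sum>j\<in>nbhd N E i. x j)) * (m i - l i))"
    by (intro sum.cong refl) (simp add: algebra_simps)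
  then show ?thesis
    unfolding lagrangian_def dot_def by (simp add: sum.distrib)
qed

lemma dual_le_lagrangian: "(\<And>i. i < N \<Longrightarrow> 0 \<le> x i \<and> x i \<le> 1) \<Longrightarrow> dual l \<le> lagrangian x l"
  using lagrangian_primal_resp_le[of x l] sqnorm_nonneg[of "\<lambda>i. x i - primal_resp l i"] delta_pos
  unfolding dual_def by (meson le_add_same_cancel1 order_trans mult_nonneg_nonneg half_gt_zero less_imp_le)

lemma dual_le_linearization: "dual m \<le> dual l + dot (dual_grad l) (\<lambda>i. m i - l i)"
proof -
  have "dual m \<le> lagrangian (primal_resp l) m"
    by (rule dual_le_lagrangian) (simp add: primal_resp_bounds)
  also have "\<dots> = dual l + dot (dual_grad l) (\<lambda>i. m i - l i)"
    unfolding dual_def dual_grad_def[abs_def] by (rule lagrangian_dual_affine)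
  finally show ?thesis .
qed

lemma sqnorm_nbhd_sum_le: "sqnorm (\<lambda>j. \<Sum>i\<in>nbhd N E j. w i) \<le> D\<^sup>2 * sqnorm w"
proof -
  have "(\<Sum>i\<in>nbhd N E j. w i)\<^sup>2 \<le> D * (\<Sum>i\<in>nbhd N E j. (w i)\<^sup>2)" if "j < N" for j
  proof -
    have "(\<Sum>i\<in>nbhd N E j. w i)\<^sup>2 \<le> real (card (nbhd N E j)) * (\<Sum>i\<in>nbhd N E j. (w i)\<^sup>2)"
      using sum_squared_le_sum_of_squares[of w "nbhd N E j"] by (simp add: mult.commute)
    also have "\<dots> \<le> D * (\<Sum>i\<in>nbhd N E j. (w i)\<^sup>2)"
      by (rule mult_right_mono[OF card_nbhd_le[OF that]]) (simp add: sum_nonneg)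
    finally show ?thesis .
  qed
  then have "sqnorm (\<lambda>j. \<Sum>i\<in>nbhd N E j. w i) \<le> D * (\<Sum>j<N. \<Sum>i\<in>nbhd N E j. (w i)\<^sup>2)"
    unfolding sqnorm_def sum_distrib_left by (intro sum_mono) auto
  also have "(\<Sum>j<N. \<Sum>i\<in>nbhd N E j. (w i)\<^sup>2) = (\<Sum>i<N. real (card (nbhd N E i)) * (w i)\<^sup>2)"
    using sum_nbhd_swap[where F="\<lambda>i j. (w i)\<^sup>2"] by simp
  also have "\<dots> \<le> D * sqnorm w"
    unfolding sqnorm_def sum_distrib_left
    by (intro sum_mono mult_right_mono card_nbhd_le) auto
  finally show ?thesis
    by (simp add: power2_eq_square mult_left_mono)
qed

text \<open>The \<open>D\<^sup>2/\<delta>\<close>-smoothness of the dual, in the form of a quadratic minorant.\<close>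

lemma dual_ge_quadratic_minorant:
  "dual l + dot (dual_grad l) (\<lambda>i. m i - l i) - D\<^sup>2 / (2*\<delta>) * sqnorm (\<lambda>i. m i - l i) \<le> dual m"
proof -
  define d where "d = (\<lambda>i. m i - l i)"
  define e where "e = (\<lambda>j. primal_resp m j - primal_resp l j)"
  define u where "u = (\<lambda>j. \<Sum>i\<in>nbhd N E j. d i)"
  have "dual l + \<delta>/2 * sqnorm e \<le> lagrangian (primal_resp m) l"
    unfolding dual_def e_def by (rule lagrangian_primal_resp_le) (simp add: primal_resp_bounds)
  moreover have "dual m = lagrangian (primal_resp m) l + dot (dual_grad l) d - dot e u"
  proof -
    have "dual m = lagrangian (primal_resp m) l + dot (\<lambda>i. 1 - (\<Sum>j\<in>nbhd N E i. primal_resp m j)) d"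
      unfolding dual_def d_def by (rule lagrangian_dual_affine)
    moreover have "dot (\<lambda>i. 1 - (\<Sum>j\<in>nbhd N E i. primal_resp m j)) d
        = dot (dual_grad l) d - dot (\<lambda>i. \<Sum>j\<in>nbhd N E i. e j) d"
      unfolding dot_def dual_grad_def e_def
      by (simp add: sum_subtractf algebra_simps)
    moreover have "dot (\<lambda>i. \<Sum>j\<in>nbhd N E i. e j) d = dot e u"
      unfolding dot_def u_def by (rule sum_nbhd_transpose)
    ultimately show ?thesis by linarith
  qed
  moreover have "- (sqnorm u / (2*\<delta>)) \<le> \<delta>/2 * sqnorm e - dot e u"
  proof -
    have "- ((u j)\<^sup>2 / (2*\<delta>)) \<le> \<delta>/2 * (e j)\<^sup>2 - e j * u j" for j
    proof -
      have "0 \<le> (\<delta> * e j - u j)\<^sup>2 / (2*\<delta>)" using delta_pos by simp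
      also have "\<dots> = \<delta>/2 * (e j)\<^sup>2 - e j * u j + (u j)\<^sup>2 / (2*\<delta>)"
        using delta_pos by (simp add: field_simps power2_eq_square)
      finally show ?thesis by linarith
    qed
    then have "(\<Sum>j<N. - ((u j)\<^sup>2 / (2*\<delta>))) \<le> (\<Sum>j<N. \<delta>/2 * (e j)\<^sup>2 - e j * u j)"
      by (intro sum_mono)
    then show ?thesis
      unfolding sqnorm_def dot_def
      by (simp add: sum_subtractf sum_distrib_left sum_divide_distrib sum_negf)
  qed
  moreover have "sqnorm u / (2*\<delta>) \<le> D\<^sup>2 / (2*\<delta>) * sqnorm d"
    using sqnorm_nbhd_sum_le[of d] delta_pos unfolding u_def by (simp add: divide_right_mono)
  ultimately show ?thesis unfolding d_def by linarith
qed

text \<open>Weak duality, using that \<open>min 1 x\<^sup>\<star>\<close> is feasible for the regularised problem.\<close>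

lemma dual_le_opt:
  assumes F: "lp_feasible N E xs" and l: "\<And>i. i < N \<Longrightarrow> 0 \<le> l i"
  shows "dual l \<le> (1 + \<delta>/2) * (\<Sum>i<N. xs i)"
proof -
  define x where "x = (\<lambda>i. min 1 (xs i))"
  have box: "0 \<le> x i \<and> x i \<le> 1" if "i < N" for i
    unfolding x_def using lp_feasible_nonneg[OF F that] by simp
  have "dual l \<le> lagrangian x l"
    using box by (rule dual_le_lagrangian)
  moreover have "1 \<le> (\<Sum>j\<in>nbhd N E i. x j)" if i: "i < N" for i
  proof (cases "\<exists>j\<in>nbhd N E i. 1 \<le> xs j")
    case True
    then obtain j where j: "j \<in> nbhd N E i" "1 \<le> xs j" by blast
    have "x j \<le> (\<Sum>j\<in>nbhd N E i. x j)"
      using j by (intro member_le_sum) (auto simp: nbhd_def box)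
    then show ?thesis using j(2) by (simp add: x_def)
  next
    case False
    then have "(\<Sum>j\<in>nbhd N E i. x j) = (\<Sum>j\<in>nbhd N E i. xs j)"
      unfolding x_def by (intro sum.cong) auto
    then show ?thesis using lp_feasible_nbhd_ge[OF F i] by simp
  qed
  then have "(\<Sum>i<N. l i * (1 - (\<Sum>j\<in>nbhd N E i. x j))) \<le> 0"
    using l by (intro sum_nonpos mult_nonneg_nonpos) auto
  moreover have "(\<Sum>i<N. x i + \<delta>/2 * (x i)\<^sup>2) \<le> (\<Sum>i<N. (1 + \<delta>/2) * xs i)"
  proof (intro sum_mono)
    fix i assume "i \<in> {..<N}"
    then have "(x i)\<^sup>2 \<le> x i"
      using box[of i] by (simp add: power2_eq_square mult_left_le)
    moreover have "x i \<le> xs i"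
      by (simp add: x_def)
    moreover from calculation have "\<delta>/2 * (x i)\<^sup>2 \<le> \<delta>/2 * xs i"
      using delta_pos by (intro mult_left_mono) auto
    ultimately show "x i + \<delta>/2 * (x i)\<^sup>2 \<le> (1 + \<delta>/2) * xs i"
      by (simp add: algebra_simps)
  qed
  ultimately show ?thesis by (simp add: lagrangian_def sum_distrib_left)
qed

end

locale dual_ascent = regularized_cover +
  fixes \<alpha> :: real
  assumes alpha_pos: "0 < \<alpha>"
    and alpha_le: "\<alpha> * D\<^sup>2 \<le> \<delta>"
begin

definition ascent_step :: "(nat \<Rightarrow> real) \<Rightarrow> nat \<Rightarrow> real" where
  "ascent_step l i = pospart (l i + \<alpha> * dual_grad l i)"

lemma ascent_step_ge:
  assumes y: "\<And>i. i < N \<Longrightarrow> 0 \<le> y i"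
  shows "dual l + dot (dual_grad l) (\<lambda>i. y i - l i) - sqnorm (\<lambda>i. y i - l i) / (2*\<alpha>)
    \<le> dual (ascent_step l)"
proof -
  let ?m = "ascent_step l"
  have "dot (dual_grad l) (\<lambda>i. y i - l i) - sqnorm (\<lambda>i. y i - l i) / (2*\<alpha>)
      \<le> dot (dual_grad l) (\<lambda>i. ?m i - l i) - sqnorm (\<lambda>i. ?m i - l i) / (2*\<alpha>)"
    using sum_mono[of "{..<N}", OF pospart_maximizes[OF alpha_pos y]]
    unfolding dot_def sqnorm_def ascent_step_def by (simp add: sum_subtractf sum_divide_distrib)
  moreover have "D\<^sup>2 / (2*\<delta>) * sqnorm (\<lambda>i. ?m i - l i) \<le> sqnorm (\<lambda>i. ?m i - l i) / (2*\<alpha>)"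
  proof -
    have "D\<^sup>2 / (2*\<delta>) \<le> 1 / (2*\<alpha>)"
      using alpha_le alpha_pos delta_pos by (simp add: field_simps)
    from mult_right_mono[OF this sqnorm_nonneg] show ?thesis by simp
  qed
  ultimately show ?thesis
    using dual_ge_quadratic_minorant[of l ?m] by linarith
qed

text \<open>The condition \<open>b\<^sup>2 \<le> A + b\<close> on consecutive weights is what makes the scheme accelerated.\<close>

lemma weighted_step_combination:
  assumes "0 < A" "0 < b" "b\<^sup>2 \<le> A + b"
    and y: "\<And>i. (A + b) * y i = A * m i + b * l i"
    and l': "\<And>i. (A + b) * l' i = A * m i + b * v i"
  shows "A * (P + dot g (\<lambda>i. m i - l' i)) + b * (P + dot g (\<lambda>i. l i - l' i))
      - sqnorm (\<lambda>i. l i - v i) / (2*\<alpha>)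
    \<le> (A + b) * (P + dot g (\<lambda>i. y i - l' i) - sqnorm (\<lambda>i. y i - l' i) / (2*\<alpha>))"
proof -
  define S where "S = sqnorm (\<lambda>i. y i - l' i) / (2*\<alpha>)"
  have "A * (g i * (m i - l' i)) + b * (g i * (l i - l' i)) = (A + b) * (g i * (y i - l' i))" for i
  proof -
    have "A * (g i * (m i - l' i)) + b * (g i * (l i - l' i))
        = g i * (A * m i + b * l i) - (A + b) * (g i * l' i)"
      by (simp add: algebra_simps)
    also have "\<dots> = g i * ((A + b) * y i) - (A + b) * (g i * l' i)"
      by (simp only: y)
    also have "\<dots> = (A + b) * (g i * (y i - l' i))"
      by (simp add: algebra_simps)
    finally show ?thesis .
  qed
  then have dot_eq: "A * dot g (\<lambda>i. m i - l' i) + b * dot g (\<lambda>i. l i - l' i)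
      = (A + b) * dot g (\<lambda>i. y i - l' i)"
    unfolding dot_def sum_distrib_left sum.distrib[symmetric] by simp
  have diff: "l i - v i = (A + b) / b * (y i - l' i)" for i
    using y[of i] l'[of i] \<open>0 < b\<close> by (simp add: field_simps)
  have "sqnorm (\<lambda>i. l i - v i) = ((A + b) / b)\<^sup>2 * sqnorm (\<lambda>i. y i - l' i)"
    unfolding sqnorm_def diff by (simp only: power_mult_distrib sum_distrib_left)
  then have "sqnorm (\<lambda>i. l i - v i) / (2*\<alpha>) = ((A + b) / b)\<^sup>2 * S"
    by (simp add: S_def)
  moreover have "A + b \<le> ((A + b) / b)\<^sup>2"
  proof -
    have "(A + b) * b\<^sup>2 \<le> (A + b)\<^sup>2"
      using mult_left_mono[OF assms(3), of "A + b"] assms(1,2) by (simp add: power2_eq_square)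
    then show ?thesis
      using assms(2) by (simp add: power_divide le_divide_eq)
  qed
  moreover have "0 \<le> S"
    unfolding S_def using sqnorm_nonneg alpha_pos by simp
  ultimately have "(A + b) * S \<le> sqnorm (\<lambda>i. l i - v i) / (2*\<alpha>)"
    by (simp add: mult_right_mono)
  moreover have "(A + b) * P = A * P + b * P"
    by (rule distrib_right)
  ultimately show ?thesis
    using dot_eq unfolding S_def[symmetric] distrib_left right_diff_distrib by linarith
qed

end

definition weight :: "nat \<Rightarrow> real" where
  "weight t = (real t + 1) / 2"

definition cum_weight :: "nat \<Rightarrow> real" where
  "cum_weight k = (real k + 1) * (real k + 2) / 4"

lemma weight_pos: "0 < weight t"
  by (simp add: weight_def)

lemma cum_weight_pos: "0 < cum_weight k"
  by (simp add: cum_weight_def)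

lemma sum_weight: "(\<Sum>t\<le>k. weight t) = cum_weight k"
  by (induction k) (simp_all add: weight_def cum_weight_def field_simps)

lemma cum_weight_Suc: "cum_weight (Suc k) = cum_weight k + weight (Suc k)"
  by (simp add: cum_weight_def weight_def field_simps)

lemma cum_weight_ratio: "cum_weight k / cum_weight (Suc k) = (real k + 1) / (real k + 3)"
  using cum_weight_pos[of "Suc k"]
  by (subst nonzero_divide_eq_eq) (auto simp: cum_weight_def field_simps)

lemma weight_ratio: "weight (Suc k) / cum_weight (Suc k) = 2 / (real k + 3)"
  using cum_weight_pos[of "Suc k"]
  by (subst nonzero_divide_eq_eq) (auto simp: cum_weight_def weight_def field_simps)

lemma weight_sq_le_cum_weight: "(weight k)\<^sup>2 \<le> cum_weight k"
  by (simp add: weight_def cum_weight_def power2_eq_square field_simps)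

text \<open>\<open>lam k\<close> is \<open>\<lambda>^(k)\<close>, and \<open>z k\<close>, \<open>xbar k\<close> are closed forms of Algorithm 1's \<open>z^(k)\<close> and
  \<open>xbar^(k)\<close> (see \<open>alg_state_snd_Suc\<close>).\<close>

context dual_ascent
begin

definition lam :: "nat \<Rightarrow> nat \<Rightarrow> real" where
  "lam k = fst (alg_state N E \<delta> \<alpha> k)"

definition z :: "nat \<Rightarrow> nat \<Rightarrow> real" where
  "z k i = (\<Sum>t\<le>k. weight t * dual_grad (lam t) i)"

definition xbar :: "nat \<Rightarrow> nat \<Rightarrow> real" where
  "xbar k i = (\<Sum>t\<le>k. weight t * primal_resp (lam t) i) / cum_weight k"

lemma lam_0: "lam 0 = (\<lambda>_. 0)"
  by (simp add: lam_def)

lemma alg_state_Suc: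
  "alg_state N E \<delta> \<alpha> (Suc k) =
    ((\<lambda>i. (real k + 1) / (real k + 3) * ascent_step (lam k) i
        + 2 / (real k + 3) * \<alpha> * pospart (fst (snd (alg_state N E \<delta> \<alpha> k)) i
                                          + weight k * dual_grad (lam k) i)),
     (\<lambda>i. fst (snd (alg_state N E \<delta> \<alpha> k)) i + weight k * dual_grad (lam k) i),
     (\<lambda>j. real k / (real k + 2) * snd (snd (alg_state N E \<delta> \<alpha> k)) j
        + 2 / (real k + 2) * primal_resp (lam k) j))"
proof -
  obtain l zk xb where "alg_state N E \<delta> \<alpha> k = (l, zk, xb)" by (metis prod_cases3)
  moreover have "proj01 ((sum l (nbhd N E i) - 1) / \<delta>) = primal_resp l i" for l i
    by (simp add: primal_resp_def)
  moreover have "1 - sum (primal_resp l) (nbhd N E i) = dual_grad l i" for l i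
    by (simp add: dual_grad_def)
  ultimately show ?thesis
    by (simp add: lam_def Let_def ascent_step_def weight_def)
qed

lemma xbar_Suc:
  "xbar (Suc k) j = cum_weight k / cum_weight (Suc k) * xbar k j
     + weight (Suc k) / cum_weight (Suc k) * primal_resp (lam (Suc k)) j"
proof -
  have "(\<Sum>t\<le>Suc k. weight t * primal_resp (lam t) j)
      = cum_weight k * xbar k j + weight (Suc k) * primal_resp (lam (Suc k)) j"
    using cum_weight_pos[of k] by (simp add: xbar_def)
  then show ?thesis
    by (simp add: xbar_def[of "Suc k"] add_divide_distrib)
qed

lemma alg_state_snd_Suc: "snd (alg_state N E \<delta> \<alpha> (Suc k)) = (z k, xbar k)"
proof (induction k)
  case 0
  show ?case
    unfolding alg_state_Suc by (simp add: fun_eq_iff z_def xbar_def weight_def cum_weight_def)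
next
  case (Suc k)
  then show ?case
    unfolding alg_state_Suc[of "Suc k"]
    by (simp del: alg_state.simps add: fun_eq_iff xbar_Suc z_def cum_weight_ratio weight_ratio add.commute)
qed

lemma z_by_alg_state: "fst (snd (alg_state N E \<delta> \<alpha> k)) i + weight k * dual_grad (lam k) i = z k i"
  by (cases k) (simp_all del: alg_state.simps(2) add: z_def alg_state_snd_Suc)

lemma lam_Suc:
  "(cum_weight k + weight (Suc k)) * lam (Suc k) i
     = cum_weight k * ascent_step (lam k) i + weight (Suc k) * (\<alpha> * pospart (z k i))"
proof -
  have "lam (Suc k) i = cum_weight k / cum_weight (Suc k) * ascent_step (lam k) i
      + weight (Suc k) / cum_weight (Suc k) * (\<alpha> * pospart (z k i))"
    unfolding cum_weight_ratio weight_ratio lam_def[of "Suc k"] alg_state_Suc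
      z_by_alg_state[symmetric] by simp
  moreover have "cum_weight (Suc k) \<noteq> 0"
    using cum_weight_pos[of "Suc k"] by simp
  ultimately show ?thesis
    by (simp add: distrib_left flip: cum_weight_Suc)
qed

lemma alg_x_eq: "alg_x N E \<delta> \<alpha> k i = xbar k i + pospart (1 - (\<Sum>j\<in>nbhd N E i. xbar k j))"
  by (simp del: alg_state.simps add: alg_x_def alg_state_snd_Suc Let_def)

lemma sum_weight_dot: "(\<Sum>t\<le>k. weight t * dot (dual_grad (lam t)) w) = dot (z k) w"
proof -
  have "(\<Sum>t\<le>k. weight t * dot (dual_grad (lam t)) w)
      = (\<Sum>t\<le>k. \<Sum>i<N. weight t * dual_grad (lam t) i * w i)"
    by (simp add: dot_def sum_distrib_left mult.assoc)
  also have "\<dots> = (\<Sum>i<N. \<Sum>t\<le>k. weight t * dual_grad (lam t) i * w i)"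
    by (rule sum.swap)
  finally show ?thesis
    by (simp add: dot_def z_def sum_distrib_right)
qed

lemma z_eq: "z k i = cum_weight k * (1 - (\<Sum>j\<in>nbhd N E i. xbar k j))"
proof -
  have "z k i = cum_weight k - (\<Sum>t\<le>k. \<Sum>j\<in>nbhd N E i. weight t * primal_resp (lam t) j)"
    by (simp add: z_def dual_grad_def right_diff_distrib sum_subtractf sum_distrib_left sum_weight)
  also have "(\<Sum>t\<le>k. \<Sum>j\<in>nbhd N E i. weight t * primal_resp (lam t) j)
      = (\<Sum>j\<in>nbhd N E i. cum_weight k * xbar k j)"
    using cum_weight_pos[of k] by (subst sum.swap) (simp add: xbar_def)
  finally show ?thesis
    by (simp add: sum_distrib_left right_diff_distrib)
qed

definition dual_model :: "nat \<Rightarrow> (nat \<Rightarrow> real) \<Rightarrow> real" where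
  "dual_model k l = (\<Sum>t\<le>k. weight t * (dual (lam t) + dot (dual_grad (lam t)) (\<lambda>i. l i - lam t i)))"

lemma dual_model_Suc:
  "dual_model (Suc k) l = dual_model k l
     + weight (Suc k) * (dual (lam (Suc k)) + dot (dual_grad (lam (Suc k))) (\<lambda>i. l i - lam (Suc k) i))"
  by (simp add: dual_model_def)

lemma dual_model_shift: "dual_model k l = dual_model k v + dot (z k) (\<lambda>i. l i - v i)"
proof -
  have "dual_model k l = (\<Sum>t\<le>k. weight t * (dual (lam t) + dot (dual_grad (lam t)) (\<lambda>i. v i - lam t i))
      + weight t * dot (dual_grad (lam t)) (\<lambda>i. l i - v i))"
    unfolding dual_model_def by (intro sum.cong refl) (simp add: dot_diff_right algebra_simps)
  also have "\<dots> = dual_model k v + (\<Sum>t\<le>k. weight t * dot (dual_grad (lam t)) (\<lambda>i. l i - v i))"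
    by (simp add: dual_model_def sum.distrib)
  finally show ?thesis
    by (simp add: sum_weight_dot)
qed

lemma dual_model_prox_bound:
  fixes k :: nat and l :: "nat \<Rightarrow> real"
  assumes "\<And>i. i < N \<Longrightarrow> 0 \<le> l i"
  defines "v \<equiv> \<lambda>i. \<alpha> * pospart (z k i)"
  shows "dual_model k l - sqnorm l / (2*\<alpha>)
    \<le> dual_model k v - sqnorm v / (2*\<alpha>) - sqnorm (\<lambda>i. l i - v i) / (2*\<alpha>)"
proof -
  have "(\<Sum>i<N. z k i * l i - (l i)\<^sup>2 / (2*\<alpha>) + (l i - v i)\<^sup>2 / (2*\<alpha>))
      \<le> (\<Sum>i<N. z k i * v i - (v i)\<^sup>2 / (2*\<alpha>))"
    unfolding v_def by (intro sum_mono pospart_maximizes_quadratic alpha_pos assms(1)) simp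
  then have "dot (z k) (\<lambda>i. l i - v i)
      \<le> sqnorm l / (2*\<alpha>) - sqnorm v / (2*\<alpha>) - sqnorm (\<lambda>i. l i - v i) / (2*\<alpha>)"
    unfolding dot_def sqnorm_def
    by (simp add: right_diff_distrib sum.distrib sum_subtractf sum_divide_distrib)
  then show ?thesis
    using dual_model_shift[of k l v] by linarith
qed

lemma dual_model_le:
  assumes "\<And>i. i < N \<Longrightarrow> 0 \<le> l i"
  shows "dual_model k l - sqnorm l / (2*\<alpha>) \<le> cum_weight k * dual (ascent_step (lam k))"
  using assms
proof (induction k arbitrary: l)
  case (0 l)
  have cw0: "cum_weight 0 = 1 / 2"
    by (simp add: cum_weight_def)
  have "dual (lam 0) + dot (dual_grad (lam 0)) l - sqnorm l / (2*\<alpha>) \<le> dual (ascent_step (lam 0))"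
    using ascent_step_ge[of l "lam 0"] 0 by (simp add: lam_0)
  moreover have "2 * dual_model 0 l = dual (lam 0) + dot (dual_grad (lam 0)) l"
    by (simp add: dual_model_def weight_def lam_0)
  moreover have "0 \<le> sqnorm l / (2*\<alpha>)"
    using sqnorm_nonneg alpha_pos by simp
  ultimately show ?case
    unfolding cw0 by linarith
next
  case (Suc k l)
  define A where "A = cum_weight k"
  define b where "b = weight (Suc k)"
  define l' where "l' = lam (Suc k)"
  define m where "m = ascent_step (lam k)"
  define v where "v = (\<lambda>i. \<alpha> * pospart (z k i))"
  define y where "y = (\<lambda>i. (A * m i + b * l i) / (A + b))"
  have A: "0 < A" and b: "0 < b" and "b\<^sup>2 \<le> A + b"
    using cum_weight_pos weight_pos weight_sq_le_cum_weight[of "Suc k"]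
    by (auto simp: A_def b_def cum_weight_Suc)
  have "0 \<le> y i" if "i < N" for i
    using A b Suc.prems[OF that] by (simp add: y_def m_def ascent_step_def)
  then have step: "dual l' + dot (dual_grad l') (\<lambda>i. y i - l' i) - sqnorm (\<lambda>i. y i - l' i) / (2*\<alpha>)
      \<le> dual (ascent_step l')"
    by (rule ascent_step_ge)
  have "dual_model (Suc k) l - sqnorm l / (2*\<alpha>)
      = (dual_model k l - sqnorm l / (2*\<alpha>)) + b * (dual l' + dot (dual_grad l') (\<lambda>i. l i - l' i))"
    by (simp add: dual_model_Suc b_def l'_def)
  also have "\<dots> \<le> A * dual m - sqnorm (\<lambda>i. l i - v i) / (2*\<alpha>)
      + b * (dual l' + dot (dual_grad l') (\<lambda>i. l i - l' i))"
    using dual_model_prox_bound[of l k] Suc.IH[of v] Suc.prems alpha_pos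
    by (simp add: A_def m_def v_def)
  also have "\<dots> \<le> A * (dual l' + dot (dual_grad l') (\<lambda>i. m i - l' i))
      + b * (dual l' + dot (dual_grad l') (\<lambda>i. l i - l' i)) - sqnorm (\<lambda>i. l i - v i) / (2*\<alpha>)"
    using mult_left_mono[OF dual_le_linearization[of m l'] less_imp_le[OF A]] by linarith
  also have "\<dots> \<le> (A + b) * (dual l' + dot (dual_grad l') (\<lambda>i. y i - l' i) - sqnorm (\<lambda>i. y i - l' i) / (2*\<alpha>))"
  proof (rule weighted_step_combination[OF A b \<open>b\<^sup>2 \<le> A + b\<close>])
    show "(A + b) * y i = A * m i + b * l i" for i
      using A b by (simp add: y_def)
    show "(A + b) * l' i = A * m i + b * v i" for i
      unfolding l'_def A_def b_def m_def v_def by (rule lam_Suc)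
  qed
  also have "\<dots> \<le> cum_weight (Suc k) * dual (ascent_step (lam (Suc k)))"
    using step A b by (simp add: cum_weight_Suc A_def b_def l'_def)
  finally show ?case .
qed

lemma dual_model_ge_primal: "cum_weight k * (\<Sum>i<N. xbar k i) + dot (z k) l \<le> dual_model k l"
proof -
  have "(\<Sum>i<N. primal_resp (lam t) i) + dot (dual_grad (lam t)) l
      \<le> dual (lam t) + dot (dual_grad (lam t)) (\<lambda>i. l i - lam t i)" for t
  proof -
    have "dual (lam t) = (\<Sum>i<N. primal_resp (lam t) i + \<delta>/2 * (primal_resp (lam t) i)\<^sup>2)
        + dot (dual_grad (lam t)) (lam t)"
      unfolding dual_def lagrangian_def dot_def dual_grad_def by (simp add: mult.commute)
    moreover have "(\<Sum>i<N. primal_resp (lam t) i)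
        \<le> (\<Sum>i<N. primal_resp (lam t) i + \<delta>/2 * (primal_resp (lam t) i)\<^sup>2)"
      using delta_pos by (intro sum_mono) simp
    ultimately show ?thesis
      by (simp add: dot_diff_right)
  qed
  then have "(\<Sum>t\<le>k. weight t * ((\<Sum>i<N. primal_resp (lam t) i) + dot (dual_grad (lam t)) l))
      \<le> dual_model k l"
    unfolding dual_model_def by (intro sum_mono mult_left_mono) (auto intro: less_imp_le weight_pos)
  moreover have "cum_weight k * (\<Sum>i<N. xbar k i)
      = (\<Sum>i<N. \<Sum>t\<le>k. weight t * primal_resp (lam t) i)"
    unfolding sum_distrib_left using cum_weight_pos[of k] by (simp add: xbar_def)
  moreover have "\<dots> = (\<Sum>t\<le>k. weight t * (\<Sum>i<N. primal_resp (lam t) i))"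
    by (subst sum.swap) (simp add: sum_distrib_left)
  ultimately show ?thesis
    by (simp add: distrib_left sum.distrib sum_weight_dot)
qed

lemma alg_x_sum_le:
  assumes "lp_feasible N E xs"
  shows "(\<Sum>i<N. alg_x N E \<delta> \<alpha> k i) \<le> (1 + \<delta>/2) * (\<Sum>i<N. xs i) + real N / (2 * \<alpha> * cum_weight k)"
proof -
  define r where "r = (\<lambda>i. 1 - (\<Sum>j\<in>nbhd N E i. xbar k j))"
  define l where "l = (\<lambda>i. if 0 < r i then 1 else (0::real))"
  have "dot (z k) l = cum_weight k * (\<Sum>i<N. pospart (r i))"
    unfolding dot_def sum_distrib_left
    by (intro sum.cong refl) (simp add: z_eq l_def r_def pospart_def)
  moreover have "(\<Sum>i<N. alg_x N E \<delta> \<alpha> k i) = (\<Sum>i<N. xbar k i) + (\<Sum>i<N. pospart (r i))"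
    by (simp add: alg_x_eq r_def sum.distrib)
  ultimately have "cum_weight k * (\<Sum>i<N. alg_x N E \<delta> \<alpha> k i) \<le> dual_model k l"
    using dual_model_ge_primal[of k l] by (simp add: distrib_left)
  also have "\<dots> \<le> cum_weight k * dual (ascent_step (lam k)) + sqnorm l / (2*\<alpha>)"
    using dual_model_le[of l k] by (fastforce simp: l_def)
  also have "\<dots> \<le> cum_weight k * ((1 + \<delta>/2) * (\<Sum>i<N. xs i)) + real N / (2*\<alpha>)"
  proof -
    have "dual (ascent_step (lam k)) \<le> (1 + \<delta>/2) * (\<Sum>i<N. xs i)"
      using assms by (rule dual_le_opt) (simp add: ascent_step_def)
    moreover have "sqnorm l \<le> real N"
      using sum_mono[of "{..<N}" "\<lambda>i. (l i)\<^sup>2" "\<lambda>_. 1"] by (simp add: sqnorm_def l_def)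
    ultimately show ?thesis
      using cum_weight_pos[of k] alpha_pos
      by (intro add_mono mult_left_mono divide_right_mono) auto
  qed
  finally have "(\<Sum>i<N. alg_x N E \<delta> \<alpha> k i)
      \<le> (cum_weight k * ((1 + \<delta>/2) * (\<Sum>i<N. xs i)) + real N / (2*\<alpha>)) / cum_weight k"
    using cum_weight_pos[of k] by (simp add: le_divide_eq mult.commute)
  also have "\<dots> = (1 + \<delta>/2) * (\<Sum>i<N. xs i) + real N / (2 * \<alpha> * cum_weight k)"
    using cum_weight_pos[of k] by (simp add: add_divide_distrib)
  finally show ?thesis .
qed

end

lemma iteration_count_bound:
  fixes D \<epsilon> OPT :: real and N k :: nat
  assumes "0 < D" "0 < \<epsilon>" "real N \<le> D * OPT" "3 * D powr (3/2) / \<epsilon> \<le> real k"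
  shows "real N / (2 * (\<epsilon> / (2 * D\<^sup>2)) * cum_weight k) \<le> \<epsilon> / 2 * OPT"
proof -
  have "(3 * D powr (3/2))\<^sup>2 \<le> (real k * \<epsilon>)\<^sup>2"
    using assms(2,4) by (intro power_mono) (simp_all add: divide_le_eq)
  moreover have "(D powr (3/2))\<^sup>2 = D ^ 3"
    using assms(1) by (simp add: power2_eq_square flip: powr_add)
  ultimately have "9 * D ^ 3 \<le> (real k * \<epsilon>)\<^sup>2"
    by (simp add: power_mult_distrib)
  moreover have "(real k * \<epsilon>)\<^sup>2 \<le> 4 * (\<epsilon>\<^sup>2 * cum_weight k)"
  proof -
    have "(real k)\<^sup>2 \<le> 4 * cum_weight k"
      by (simp add: cum_weight_def power2_eq_square algebra_simps)
    from mult_left_mono[OF this, of "\<epsilon>\<^sup>2"] show ?thesis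
      by (simp add: power_mult_distrib mult_ac)
  qed
  moreover have "0 \<le> D ^ 3"
    using assms(1) by simp
  ultimately have "2 * D ^ 3 \<le> \<epsilon>\<^sup>2 * cum_weight k"
    by linarith
  moreover have "0 \<le> OPT"
  proof -
    have "0 \<le> D * OPT"
      using assms(3) of_nat_0_le_iff order_trans by blast
    then show ?thesis
      using assms(1) by (simp add: zero_le_mult_iff)
  qed
  ultimately have opt_bound: "D ^ 3 * OPT \<le> \<epsilon>\<^sup>2 * cum_weight k * OPT / 2"
    using mult_right_mono[of "2 * D ^ 3" "\<epsilon>\<^sup>2 * cum_weight k" OPT] by simp
  have "real N / (2 * (\<epsilon> / (2 * D\<^sup>2)) * cum_weight k) \<le> D ^ 3 * OPT / (\<epsilon> * cum_weight k)"
    using assms(1-3) cum_weight_pos[of k]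
    by (simp add: divide_right_mono field_simps power2_eq_square power3_eq_cube)
  also have "\<dots> \<le> \<epsilon>\<^sup>2 * cum_weight k * OPT / 2 / (\<epsilon> * cum_weight k)"
    using assms(2) cum_weight_pos[of k] by (intro divide_right_mono[OF opt_bound]) simp
  also have "\<dots> = \<epsilon> / 2 * OPT"
    using assms(2) cum_weight_pos[of k] by (simp add: power2_eq_square)
  finally show ?thesis .
qed

theorem corollary1:
  shows "\<exists>C>0. \<forall>(\<epsilon>::real) (N::nat) (E::nat set set) (xs::nat \<Rightarrow> real) (k::nat).
     0 < \<epsilon> \<and> \<epsilon> \<le> 1 \<and> N \<ge> 1 \<and> simple_graph N E \<and> lp_optimal N E xs \<and>
     real k \<ge> C * (real (dmax N E) + 1) powr (3/2) / \<epsilon> \<longrightarrow>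
     ((\<Sum>i<N. alg_x N E \<epsilon> (\<epsilon> / (2 * (real (dmax N E) + 1)^2)) k i) - (\<Sum>i<N. xs i))
       / (\<Sum>i<N. xs i) \<le> \<epsilon>"
proof (intro exI[of _ 3] conjI allI impI)
  fix \<epsilon> :: real and N :: nat and E :: "nat set set" and xs :: "nat \<Rightarrow> real" and k :: nat
  assume H: "0 < \<epsilon> \<and> \<epsilon> \<le> 1 \<and> N \<ge> 1 \<and> simple_graph N E \<and> lp_optimal N E xs \<and>
    real k \<ge> 3 * (real (dmax N E) + 1) powr (3/2) / \<epsilon>"
  define \<alpha> where "\<alpha> = \<epsilon> / (2 * (real (dmax N E) + 1)^2)"
  define OPT where "OPT = (\<Sum>i<N. xs i)"
  have F: "lp_feasible N E xs"
    using H by (simp add: lp_optimal_def)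
  interpret dual_ascent N E \<epsilon> \<alpha>
    using H by unfold_locales (simp_all add: \<alpha>_def)
  have N_le: "real N \<le> D * OPT"
    unfolding OPT_def by (rule lp_feasible_sum_ge[OF F])
  moreover have "0 < real N"
    using H by simp
  ultimately have OPT_pos: "0 < OPT"
    using zero_less_mult_pos[of D OPT] by simp
  have "(\<Sum>i<N. alg_x N E \<epsilon> \<alpha> k i) \<le> (1 + \<epsilon>/2) * OPT + real N / (2 * \<alpha> * cum_weight k)"
    unfolding OPT_def by (rule alg_x_sum_le[OF F])
  also have "real N / (2 * \<alpha> * cum_weight k) \<le> \<epsilon> / 2 * OPT"
    unfolding \<alpha>_def using H N_le by (intro iteration_count_bound) auto
  finally have "(\<Sum>i<N. alg_x N E \<epsilon> \<alpha> k i) - OPT \<le> \<epsilon> * OPT"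
    by (simp add: algebra_simps)
  then show "((\<Sum>i<N. alg_x N E \<epsilon> (\<epsilon> / (2 * (real (dmax N E) + 1)^2)) k i) - (\<Sum>i<N. xs i))
      / (\<Sum>i<N. xs i) \<le> \<epsilon>"
    using OPT_pos by (simp add: divide_le_eq \<alpha>_def OPT_def)
qed (simp)

end
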